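(* Let $f:\mathbb{R}^d\to\mathbb{R}$ and $P:\mathbb{R}^d\to\mathbb{R}^s$ be continuously differentiable, $D\subseteq\mathbb{R}^s$ closed, $\Omega=\{z\mid P(z)\in D\}$, and let $\bar z\in\Omega$ be B-stationary for the problem $\min f(z)$ s.t. $P(z)\in D$. Assume that GGCQ holds at $\bar z$ and that the mapping $u\rightrightarrows\nabla P(\bar z)u-T_D(P(\bar z))$ is metrically subregular at $(0,0)$. Then one of the following two conditions is fulfilled: (1) There exist $w\in T_D(P(\bar z))$ and $w^\ast\in\widehat N_{T_D(P(\bar z))}(w)$ such that $\nabla f(\bar z)+\nabla P(\bar z)^\ast w^\ast=0$. (2) There exists $\bar u\in T^{\rm lin}_{P,D}(\bar z)$ such that $\nabla P(\bar z)\bar u\notin\operatorname{Lsp}(T_D(P(\bar z)))$, $\langle\nabla f(\bar z),\bar u\rangle=0$, $0\in\nabla f(\bar z)+\widehat N_{T^{\rm lin}_{P,D}(\bar z)}(\bar u)$, and $T_D(P(\bar z))$ is not locally polyhedral near $\nabla P(\bar z)\bar u$.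
   Context: Tangent cone: $T_\Omega(\bar z)=\{w\mid \exists t_k\downarrow0,\ w_k\to w,\ \bar z+t_kw_k\in\Omega\}$ (empty if $\bar z\notin\Omega$). Polar cone $K^\ast=\{z^\ast\mid\langle z^\ast,w\rangle\le0\ \forall w\in K\}$; regular normal cone $\widehat N_\Omega(\bar z)=(T_\Omega(\bar z))^\ast$ (empty if $\bar z\notin\Omega$). Linearized tangent cone: $T^{\rm lin}_{P,D}(\bar z)=\{u\mid\nabla P(\bar z)u\in T_D(P(\bar z))\}$. $\bar z$ is B-stationary if $0\in\nabla f(\bar z)+\widehat N_\Omega(\bar z)$. GGCQ holds at $\bar z$ if $\widehat N_\Omega(\bar z)=(T^{\rm lin}_{P,D}(\bar z))^\ast$. A mapping $M$ is metrically subregular at $(\bar z,\bar w)\in\operatorname{gph}M$ if there are a neighborhood $W$ of $\bar z$ and $\kappa>0$ with $\operatorname{dist}(z,M^{-1}(\bar w))\le\kappa\operatorname{dist}(\bar w,M(z))$ for all $z\in W$. For a cone $C$, $\operatorname{Lsp}(C)$ is the largest linear subspace $L$ with $C+L\subseteq C$. A set is polyhedral if it is a finite union of sets of the form $\{z\mid\langle a_i,z\rangle\le\alpha_i,\ i=1,\dots,p\}$; a set $\Omega$ is locally polyhedral near $\bar z\in\Omega$ if there are a neighborhood $W$ of $\bar z$ and a polyhedral set $C$ with $\Omega\cap W=C\cap W$. *)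

theory Defs
  imports "HOL-Analysis.Analysis"
begin

definition tangent_cone :: "('a::real_normed_vector) set \<Rightarrow> 'a \<Rightarrow> 'a set" where
  "tangent_cone \<Omega> z = {w. z \<in> \<Omega> \<and> (\<exists>t wk. (\<forall>k. t k > 0) \<and> t \<longlonglongrightarrow> 0 \<and>
       wk \<longlonglongrightarrow> w \<and> (\<forall>k. z + t k *\<^sub>R wk k \<in> \<Omega>))}"

definition polar_cone :: "('a::real_inner) set \<Rightarrow> 'a set" where
  "polar_cone K = {y. \<forall>w\<in>K. inner y w \<le> 0}"

definition regular_normal_cone :: "('a::real_inner) set \<Rightarrow> 'a \<Rightarrow> 'a set" where
  "regular_normal_cone \<Omega> z = (if z \<in> \<Omega> then polar_cone (tangent_cone \<Omega> z) else {})"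

text \<open>Linearized tangent cone; the Jacobian of P at z is given as the matrix JP z.\<close>
definition lin_tangent_cone ::
  "(real^'d \<Rightarrow> real^'d^'s) \<Rightarrow> (real^'d \<Rightarrow> real^'s) \<Rightarrow> (real^'s) set \<Rightarrow> real^'d \<Rightarrow> (real^'d) set" where
  "lin_tangent_cone JP P D z = {u. JP z *v u \<in> tangent_cone D (P z)}"

definition graph_of :: "('a \<Rightarrow> 'b set) \<Rightarrow> ('a \<times> 'b) set" where
  "graph_of M = {(x, y). y \<in> M x}"

definition inverse_image_mv :: "('a \<Rightarrow> 'b set) \<Rightarrow> 'b \<Rightarrow> 'a set" where
  "inverse_image_mv M w = {x. w \<in> M x}"

text \<open>Metric subregularity. The distance to the empty set is +infinity, so the
  inequality is only required where M x is nonempty.\<close>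
definition metrically_subregular ::
  "('a::metric_space \<Rightarrow> ('b::metric_space) set) \<Rightarrow> 'a \<Rightarrow> 'b \<Rightarrow> bool" where
  "metrically_subregular M z w \<longleftrightarrow> (z, w) \<in> graph_of M \<and>
     (\<exists>W \<kappa>. open W \<and> z \<in> W \<and> \<kappa> > 0 \<and>
        (\<forall>x\<in>W. M x \<noteq> {} \<longrightarrow> infdist x (inverse_image_mv M w) \<le> \<kappa> * infdist w (M x)))"

definition Lsp :: "('a::real_vector) set \<Rightarrow> 'a set" where
  "Lsp C = (THE L. subspace L \<and> {c + l | c l. c \<in> C \<and> l \<in> L} \<subseteq> C \<and>
     (\<forall>L'. subspace L' \<and> {c + l | c l. c \<in> C \<and> l \<in> L'} \<subseteq> C \<longrightarrow> L' \<subseteq> L))"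

definition polyhedral_set :: "('a::real_inner) set \<Rightarrow> bool" where
  "polyhedral_set S \<longleftrightarrow> (\<exists>F. finite F \<and> S = \<Union>F \<and>
     (\<forall>Q\<in>F. \<exists>(p::nat) a \<alpha>. Q = {z. \<forall>i<p. inner (a i) z \<le> \<alpha> i}))"

definition locally_polyhedral :: "('a::real_inner) set \<Rightarrow> 'a \<Rightarrow> bool" where
  "locally_polyhedral \<Omega> z \<longleftrightarrow> z \<in> \<Omega> \<and>
     (\<exists>W C. open W \<and> z \<in> W \<and> polyhedral_set C \<and> \<Omega> \<inter> W = C \<inter> W)"

end

theory Submission
  imports Defs
begin

(*
  Write T for the tangent cone of D at P zb, A for JP zb and g for gf zb.  B-stationarity and
  GGCQ say that <g, u> >= 0 whenever A u lies in T.  Consider the gap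
  inf {|A u - t| : <g, u> = -1, t in T}  (cone_gap A g T).

  If the gap is attained at (u, t), the residual r = A u - t is nonzero, normal to T at t and
  orthogonal to t, and the first-order condition for u on the hyperplane <g, u> = -1 makes
  A^T r a multiple of g; pairing with u gives A^T r = -|r|^2 g, so r / |r|^2 yields
  alternative (1) with w = t.

  If it is not attained, take a minimizing sequence with u orthogonal to the directions n with
  <g, n> = 0 and A n in Lsp T, which change neither feasibility nor the residual.  The sequence
  diverges, and its normalized limit is a direction y <> 0 with <g, y> = 0, A y in T and, by
  the orthogonality, A y not in Lsp T.  If T were locally polyhedral at A y, the normalized
  sequence would frequently lie in one polyhedral cone K at A y; the gap problem restricted
  to K attains its infimum (a Frank-Wolfe argument for the norm of a linear map on a
  polyhedron), and moving along the ray through A y turns that minimizer into a feasible pair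
  attaining the gap.  Hence u = y gives alternative (2), the normal-cone condition there
  holding because u minimizes <g, .> over the linearized cone.
*)

lemma tangent_coneI_approx:
  assumes "z \<in> S"
    and "\<And>e. e > 0 \<Longrightarrow> \<exists>t v. 0 < t \<and> t < e \<and> dist v w < e \<and> z + t *\<^sub>R v \<in> S"
  shows "w \<in> tangent_cone S z"
proof -
  have "\<forall>k. \<exists>t v. 0 < t \<and> t < inverse (Suc k) \<and> dist v w < inverse (Suc k) \<and> z + t *\<^sub>R v \<in> S"
    using assms(2) by simp
  then obtain t v where t_pos: "\<And>k. 0 < t k" and t_small: "\<And>k. t k < inverse (Suc k)"
    and v_near: "\<And>k. dist (v k) w < inverse (Suc k)" and in_S: "\<And>k. z + t k *\<^sub>R v k \<in> S"
    by metis
  have "norm (t k) \<le> inverse (Suc k)" "norm (v k - w) \<le> inverse (Suc k)" for k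
    using t_pos[of k] t_small[of k] v_near[of k] by (simp_all add: dist_norm)
  then have "t \<longlonglongrightarrow> 0" "(\<lambda>k. v k - w) \<longlonglongrightarrow> 0"
    by (intro Lim_null_comparison[OF always_eventually LIMSEQ_inverse_real_of_nat] allI; blast)+
  then have "t \<longlonglongrightarrow> 0" "v \<longlonglongrightarrow> w"
    by (simp_all add: LIM_zero_iff)
  then show ?thesis
    using assms(1) t_pos in_S unfolding tangent_cone_def by blast
qed

lemma tangent_coneD_approx:
  assumes "w \<in> tangent_cone S z" "e > 0"
  shows "\<exists>t v. 0 < t \<and> t < e \<and> dist v w < e \<and> z + t *\<^sub>R v \<in> S"
proof -
  obtain t v where t_pos: "\<And>k. 0 < t k" and "t \<longlonglongrightarrow> 0" "v \<longlonglongrightarrow> w"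
    and in_S: "\<And>k. z + t k *\<^sub>R v k \<in> S"
    using assms(1) unfolding tangent_cone_def by blast
  then have "eventually (\<lambda>k. t k < e \<and> dist (v k) w < e) sequentially"
    using assms(2) by (intro eventually_conj order_tendstoD(2) tendstoD) auto
  then obtain k where "t k < e" "dist (v k) w < e"
    using eventually_happens'[OF trivial_limit_sequentially] by blast
  then show ?thesis
    using t_pos in_S by blast
qed

lemma tangent_coneI_ray:
  assumes "z \<in> S" "eventually (\<lambda>s. z + s *\<^sub>R w \<in> S) (at_right 0)"
  shows "w \<in> tangent_cone S z"
proof (rule tangent_coneI_approx[OF assms(1)])
  fix e :: real assume "e > 0"
  obtain b where "b > 0" and ray: "\<And>s. 0 < s \<Longrightarrow> s < b \<Longrightarrow> z + s *\<^sub>R w \<in> S"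
    using assms(2) unfolding eventually_at_right_field by auto
  show "\<exists>t v. 0 < t \<and> t < e \<and> dist v w < e \<and> z + t *\<^sub>R v \<in> S"
    using \<open>e > 0\<close> \<open>b > 0\<close> ray[of "min e b / 2"] by (intro exI[of _ "min e b / 2"] exI[of _ w]) auto
qed

lemma zero_in_tangent_cone: "z \<in> S \<Longrightarrow> 0 \<in> tangent_cone S z"
  by (rule tangent_coneI_ray) auto

lemma cone_tangent_cone: "cone (tangent_cone S z)"
  unfolding cone_def
proof (intro ballI allI impI)
  fix w and c :: real assume "w \<in> tangent_cone S z" and "0 \<le> c"
  then obtain t v where "z \<in> S" and t_pos: "\<And>k. 0 < t k" and "t \<longlonglongrightarrow> 0" "v \<longlonglongrightarrow> w"
    and in_S: "\<And>k. z + t k *\<^sub>R v k \<in> S"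
    unfolding tangent_cone_def by blast
  show "c *\<^sub>R w \<in> tangent_cone S z"
  proof (cases "c = 0")
    case True
    then show ?thesis using zero_in_tangent_cone[OF \<open>z \<in> S\<close>] by simp
  next
    case False
    with \<open>0 \<le> c\<close> have "c > 0" by simp
    have "(\<lambda>k. t k / c) \<longlonglongrightarrow> 0" "(\<lambda>k. c *\<^sub>R v k) \<longlonglongrightarrow> c *\<^sub>R w"
      using \<open>t \<longlonglongrightarrow> 0\<close> \<open>v \<longlonglongrightarrow> w\<close> by (auto intro: tendsto_divide_zero tendsto_scaleR)
    moreover have "\<forall>k. z + (t k / c) *\<^sub>R (c *\<^sub>R v k) \<in> S" "\<forall>k. t k / c > 0"
      using in_S t_pos \<open>c > 0\<close> by auto
    ultimately show ?thesis
      using \<open>z \<in> S\<close> unfolding tangent_cone_def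
      by (intro CollectI conjI exI[of _ "\<lambda>k. t k / c"] exI[of _ "\<lambda>k. c *\<^sub>R v k"]) simp_all
  qed
qed

lemma closed_tangent_cone: "closed (tangent_cone S z)"
proof (cases "z \<in> S")
  case False
  then have "tangent_cone S z = {}" by (simp add: tangent_cone_def)
  then show ?thesis by simp
next
  case True
  show ?thesis unfolding closed_limpt
  proof (intro allI impI)
    fix w assume "w islimpt tangent_cone S z"
    show "w \<in> tangent_cone S z"
    proof (rule tangent_coneI_approx[OF True])
      fix e :: real assume "e > 0"
      then have "e / 2 > 0" by simp
      then obtain w' where w': "w' \<in> tangent_cone S z" "dist w' w < e / 2"
        using \<open>w islimpt _\<close> unfolding islimpt_approachable by blast
      obtain t v where "0 < t" "t < e / 2" "dist v w' < e / 2" "z + t *\<^sub>R v \<in> S"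
        using tangent_coneD_approx[OF w'(1) \<open>e / 2 > 0\<close>] by blast
      moreover have "dist v w < e"
        using dist_triangle[of v w w'] \<open>dist v w' < e / 2\<close> w'(2) by linarith
      ultimately show "\<exists>t v. 0 < t \<and> t < e \<and> dist v w < e \<and> z + t *\<^sub>R v \<in> S"
        by (intro exI[of _ t] exI[of _ v]) simp
    qed
  qed
qed

lemma polar_cone_scaleR: "v \<in> polar_cone K \<Longrightarrow> 0 \<le> c \<Longrightarrow> c *\<^sub>R v \<in> polar_cone K"
  unfolding polar_cone_def by (auto simp: mult_nonneg_nonpos)

lemma polar_cone_orthogonal:
  assumes "v \<in> polar_cone K" "h \<in> K" "- h \<in> K"
  shows "inner v h = 0"
proof -
  have "inner v h \<le> 0" "inner v (- h) \<le> 0"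
    using assms unfolding polar_cone_def by blast+
  then show ?thesis by simp
qed

lemma minimizer_neg_gradient_in_polar_tangent_cone:
  fixes \<phi> :: "'a::real_inner \<Rightarrow> real"
  assumes "x \<in> S" and deriv: "(\<phi> has_derivative (\<lambda>h. inner G h)) (at x within S)"
    and min: "\<And>y. y \<in> S \<Longrightarrow> \<phi> x \<le> \<phi> y"
  shows "- G \<in> polar_cone (tangent_cone S x)"
  unfolding polar_cone_def
proof (intro CollectI ballI)
  fix w assume "w \<in> tangent_cone S x"
  then obtain t v where t_pos: "\<And>k. 0 < t k" and "t \<longlonglongrightarrow> 0" "v \<longlonglongrightarrow> w"
    and in_S: "\<And>k. x + t k *\<^sub>R v k \<in> S"
    unfolding tangent_cone_def by blast
  have bound: "- inner G w \<le> e * norm w" if "e > 0" for e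
  proof -
    obtain d where "d > 0" and d: "\<And>y. y \<in> S \<Longrightarrow> norm (y - x) < d \<Longrightarrow>
        norm (\<phi> y - \<phi> x - inner G (y - x)) \<le> e * norm (y - x)"
      using deriv \<open>e > 0\<close> unfolding has_derivative_within_alt by blast
    have "(\<lambda>k. t k *\<^sub>R v k) \<longlonglongrightarrow> 0 *\<^sub>R w"
      by (intro tendsto_intros \<open>t \<longlonglongrightarrow> 0\<close> \<open>v \<longlonglongrightarrow> w\<close>)
    then have "eventually (\<lambda>k. norm (t k *\<^sub>R v k) < d) sequentially"
      using \<open>d > 0\<close> by (auto dest: tendstoD simp: dist_norm)
    then have "eventually (\<lambda>k. - inner G (v k) \<le> e * norm (v k)) sequentially"
    proof (rule eventually_mono)
      fix k assume "norm (t k *\<^sub>R v k) < d"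
      then have "\<phi> (x + t k *\<^sub>R v k) - \<phi> x - t k * inner G (v k) \<le> t k * (e * norm (v k))"
        using d[OF in_S[of k]] t_pos[of k] by (auto simp: abs_le_iff mult.left_commute)
      moreover have "\<phi> x \<le> \<phi> (x + t k *\<^sub>R v k)" by (rule min[OF in_S])
      ultimately have "t k * (- inner G (v k)) \<le> t k * (e * norm (v k))" by simp
      then show "- inner G (v k) \<le> e * norm (v k)" using t_pos[of k] by (rule mult_left_le_imp_le)
    qed
    moreover have "(\<lambda>k. - inner G (v k)) \<longlonglongrightarrow> - inner G w" "(\<lambda>k. e * norm (v k)) \<longlonglongrightarrow> e * norm w"
      by (intro tendsto_intros \<open>v \<longlonglongrightarrow> w\<close>)+
    ultimately show ?thesis by (intro tendsto_le[OF trivial_limit_sequentially]) auto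
  qed
  have lim: "((\<lambda>e. e * norm w) \<longlongrightarrow> 0 * norm w) (at_right 0)"
    by (intro tendsto_intros)
  have "eventually (\<lambda>e. - inner G w \<le> e * norm w) (at_right (0::real))"
    using bound eventually_at_right_less[of 0] by (rule eventually_mono[rotated]) simp
  then have "- inner G w \<le> 0 * norm w"
    by (rule tendsto_le[OF trivial_limit_at_right_real lim tendsto_const])
  then show "inner (- G) w \<le> 0" by simp
qed

lemma has_derivative_norm_sq_diff:
  assumes "bounded_linear L"
  shows "((\<lambda>x. (norm (L x - c))\<^sup>2) has_derivative (\<lambda>h. 2 * inner (L x - c) (L h))) (at x within S)"
proof -
  have "(L has_derivative L) (at x within S)"
    by (rule bounded_linear_imp_has_derivative[OF assms])
  then have diff: "((\<lambda>x. L x - c) has_derivative (\<lambda>h. L h - 0)) (at x within S)"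
    by (rule has_derivative_diff[OF _ has_derivative_const])
  have "((\<lambda>x. inner (L x - c) (L x - c)) has_derivative
      (\<lambda>h. inner (L x - c) (L h - 0) + inner (L h - 0) (L x - c))) (at x within S)"
    by (rule has_derivative_inner[OF diff diff])
  then show ?thesis
    unfolding power2_norm_eq_inner by (simp add: inner_commute)
qed

lemma subspace_line_directions: "subspace {l. \<forall>c\<in>C. \<forall>s::real. c + s *\<^sub>R l \<in> C}"
  (is "subspace ?V")
  unfolding subspace_def
proof (intro conjI ballI allI)
  show "0 \<in> ?V" by simp
next
  fix x y assume x: "x \<in> ?V" and y: "y \<in> ?V"
  show "x + y \<in> ?V"
  proof (intro CollectI ballI allI)
    fix c and s :: real assume "c \<in> C"
    then have "(c + s *\<^sub>R x) + s *\<^sub>R y \<in> C"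
      using x y by blast
    then show "c + s *\<^sub>R (x + y) \<in> C" by (simp add: algebra_simps)
  qed
next
  fix a :: real and x assume x: "x \<in> ?V"
  show "a *\<^sub>R x \<in> ?V"
  proof (intro CollectI ballI allI)
    fix c and s :: real assume "c \<in> C"
    then have "c + (s * a) *\<^sub>R x \<in> C"
      using x by blast
    then show "c + s *\<^sub>R a *\<^sub>R x \<in> C" by simp
  qed
qed

lemma Lsp_eq: "Lsp C = {l. \<forall>c\<in>C. \<forall>s::real. c + s *\<^sub>R l \<in> C}"
  (is "_ = ?V")
proof -
  have translate: "{c + l | c l. c \<in> C \<and> l \<in> ?V} \<subseteq> C"
  proof
    fix y assume "y \<in> {c + l | c l. c \<in> C \<and> l \<in> ?V}"
    then obtain c l where "y = c + 1 *\<^sub>R l" "c \<in> C" "l \<in> ?V" by auto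
    then show "y \<in> C" by blast
  qed
  have maximal: "L \<subseteq> ?V" if "subspace L" "{c + l | c l. c \<in> C \<and> l \<in> L} \<subseteq> C" for L
  proof (intro subsetI CollectI ballI allI)
    fix l c and s :: real assume "l \<in> L" "c \<in> C"
    then have "s *\<^sub>R l \<in> L" using \<open>subspace L\<close> by (simp add: subspace_scale)
    then show "c + s *\<^sub>R l \<in> C" using that(2) \<open>c \<in> C\<close> by blast
  qed
  show ?thesis
    unfolding Lsp_def
  proof (rule the_equality)
    show "subspace ?V \<and> {c + l | c l. c \<in> C \<and> l \<in> ?V} \<subseteq> C \<and>
        (\<forall>L. subspace L \<and> {c + l | c l. c \<in> C \<and> l \<in> L} \<subseteq> C \<longrightarrow> L \<subseteq> ?V)"
      using maximal by (intro conjI allI impI subspace_line_directions translate) (elim conjE)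
  next
    fix L assume L: "subspace L \<and> {c + l | c l. c \<in> C \<and> l \<in> L} \<subseteq> C \<and>
        (\<forall>L'. subspace L' \<and> {c + l | c l. c \<in> C \<and> l \<in> L'} \<subseteq> C \<longrightarrow> L' \<subseteq> L)"
    show "L = ?V"
    proof (rule subset_antisym)
      show "L \<subseteq> ?V" using L by (elim conjE) (rule maximal)
      show "?V \<subseteq> L"
        using L[THEN conjunct2, THEN conjunct2, rule_format, OF conjI[OF subspace_line_directions translate]] .
    qed
  qed
qed

lemma subspace_Lsp: "subspace (Lsp C)"
  unfolding Lsp_eq by (rule subspace_line_directions)

lemma Lsp_translate: "c \<in> C \<Longrightarrow> l \<in> Lsp C \<Longrightarrow> c + s *\<^sub>R l \<in> C"
  unfolding Lsp_eq by blast

lemma orthogonal_to_hyperplane_imp_parallel: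
  fixes g x :: "'a::real_inner"
  assumes "g \<noteq> 0" and orth: "\<And>h. inner g h = 0 \<Longrightarrow> inner x h = 0"
  shows "x = (inner x g / inner g g) *\<^sub>R g"
proof -
  define h where "h = x - (inner x g / inner g g) *\<^sub>R g"
  have "inner g h = 0"
    using \<open>g \<noteq> 0\<close> by (simp add: h_def inner_diff_right inner_commute)
  then have "inner h h = inner x h"
    by (simp add: h_def inner_diff_left)
  also have "\<dots> = 0" by (rule orth) fact
  finally show ?thesis by (simp add: h_def)
qed

lemma dominating_point_on_face:
  fixes M :: "'a::real_inner \<Rightarrow> 'b::real_normed_vector"
  assumes "linear M" "affine E" "x \<in> E" "y \<in> E"
    and x_feas: "\<forall>i\<in>I. inner (a i) x \<le> b i" and y_feas: "\<forall>i\<in>I. inner (a i) y \<le> b i"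
    and "inner (a j) y \<le> b j" "b j < inner (a j) x"
    and "norm (M x) \<le> norm (M y)"
  obtains z where "z \<in> E" "\<forall>i\<in>I. inner (a i) z \<le> b i" "inner (a j) z = b j"
    "norm (M z) \<le> norm (M y)"
proof
  define \<theta> where "\<theta> = (b j - inner (a j) y) / (inner (a j) x - inner (a j) y)"
  have "0 \<le> \<theta>" "\<theta> \<le> 1"
    using assms(7,8) by (auto simp: \<theta>_def divide_le_eq_1)
  define z where "z = (1 - \<theta>) *\<^sub>R y + \<theta> *\<^sub>R x"
  show "z \<in> E"
    using \<open>affine E\<close> \<open>x \<in> E\<close> \<open>y \<in> E\<close> unfolding affine_def z_def by simp
  have z_inner: "inner (a i) z = (1 - \<theta>) * inner (a i) y + \<theta> * inner (a i) x" for i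
    by (simp add: z_def inner_add_right)
  show "\<forall>i\<in>I. inner (a i) z \<le> b i"
    unfolding z_inner using x_feas y_feas \<open>0 \<le> \<theta>\<close> \<open>\<theta> \<le> 1\<close>
    by (auto intro!: convex_bound_le)
  have "inner (a j) x - inner (a j) y \<noteq> 0"
    using assms(7,8) by linarith
  have "inner (a j) z = inner (a j) y + \<theta> * (inner (a j) x - inner (a j) y)"
    unfolding z_inner by (simp add: algebra_simps)
  also have "\<dots> = b j"
    using \<open>inner (a j) x - inner (a j) y \<noteq> 0\<close> by (simp add: \<theta>_def)
  finally show "inner (a j) z = b j" .
  have "norm (M z) \<le> (1 - \<theta>) * norm (M y) + \<theta> * norm (M x)"
    using norm_triangle_ineq[of "(1 - \<theta>) *\<^sub>R M y" "\<theta> *\<^sub>R M x"] \<open>0 \<le> \<theta>\<close> \<open>\<theta> \<le> 1\<close>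
    by (simp add: z_def linear_add[OF \<open>linear M\<close>] linear_scale[OF \<open>linear M\<close>])
  also have "\<dots> \<le> norm (M y)"
    using \<open>norm (M x) \<le> norm (M y)\<close> \<open>0 \<le> \<theta>\<close> mult_left_mono by (fastforce simp: algebra_simps)
  finally show "norm (M z) \<le> norm (M y)" .
qed

lemma norm_linear_attains_min_on_affine:
  fixes M :: "'a::euclidean_space \<Rightarrow> 'b::euclidean_space"
  assumes "linear M" "affine E" "x\<^sub>0 \<in> E"
  obtains x where "x \<in> E" "\<And>y. y \<in> E \<Longrightarrow> norm (M x) \<le> norm (M y)"
proof -
  have "M ` E = affine hull (M ` E)"
    using affine_hull_linear_image[of M E] hull_same[of affine E] \<open>affine E\<close> \<open>linear M\<close>
    by (simp add: linear_conv_bounded_linear)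
  then have "closed (M ` E)"
    by (metis affine_affine_hull affine_closed)
  then obtain m where "m \<in> M ` E" and m_min: "\<And>y. y \<in> M ` E \<Longrightarrow> dist 0 m \<le> dist 0 y"
    using distance_attains_inf[of "M ` E" 0] \<open>x\<^sub>0 \<in> E\<close> by blast
  then obtain x where "x \<in> E" "m = M x" by blast
  have "norm (M x) \<le> norm (M y)" if y: "y \<in> E" for y
    using m_min[of "M y"] \<open>m = M x\<close> y by simp
  with \<open>x \<in> E\<close> show thesis by (rule that)
qed

lemma norm_linear_attains_min_on_polyhedron:
  fixes M :: "'a::euclidean_space \<Rightarrow> 'b::euclidean_space"
  assumes "linear M" "finite I" "affine E" "x\<^sub>0 \<in> E" "\<forall>i\<in>I. inner (a i) x\<^sub>0 \<le> b i"
  shows "\<exists>x\<in>E. (\<forall>i\<in>I. inner (a i) x \<le> b i) \<and>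
    (\<forall>y\<in>E. (\<forall>i\<in>I. inner (a i) y \<le> b i) \<longrightarrow> norm (M x) \<le> norm (M y))"
  using assms(2-5)
proof (induction I arbitrary: E x\<^sub>0 rule: finite_induct)
  case (empty E)
  obtain x where "x \<in> E" "\<And>y. y \<in> E \<Longrightarrow> norm (M x) \<le> norm (M y)"
    using norm_linear_attains_min_on_affine[OF \<open>linear M\<close> empty.prems(1,2)] by blast
  then show ?case by blast
next
  case (insert j I E x\<^sub>0)
  obtain x where x: "x \<in> E" "\<forall>i\<in>I. inner (a i) x \<le> b i"
    and x_min: "\<forall>y\<in>E. (\<forall>i\<in>I. inner (a i) y \<le> b i) \<longrightarrow> norm (M x) \<le> norm (M y)"
    using insert.IH[OF insert.prems(1,2)] insert.prems(3) by blast
  show ?case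
  proof (cases "inner (a j) x \<le> b j")
    case True
    then show ?thesis using x x_min by (intro bexI[of _ x]) auto
  next
    case False
    \<comment> \<open>Then the new constraint is active at a minimizer, so one can minimize over its hyperplane.\<close>
    define E' where "E' = E \<inter> {z. inner (a j) z = b j}"
    have "affine E'"
      unfolding E'_def using \<open>affine E\<close> affine_hyperplane by (rule affine_Int)
    have face: "\<exists>z\<in>E'. (\<forall>i\<in>I. inner (a i) z \<le> b i) \<and> norm (M z) \<le> norm (M y)"
      if y: "y \<in> E" "\<forall>i\<in>insert j I. inner (a i) y \<le> b i" for y
    proof -
      have "norm (M x) \<le> norm (M y)" "\<forall>i\<in>I. inner (a i) y \<le> b i" "inner (a j) y \<le> b j"
        using x_min y by simp_all
      then obtain z where "z \<in> E" "\<forall>i\<in>I. inner (a i) z \<le> b i" "inner (a j) z = b j"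
          "norm (M z) \<le> norm (M y)"
        using dominating_point_on_face[OF \<open>linear M\<close> \<open>affine E\<close> x(1) y(1) x(2)] False
        by (metis not_le)
      then show ?thesis unfolding E'_def by blast
    qed
    obtain z where "z \<in> E'" "\<forall>i\<in>I. inner (a i) z \<le> b i"
      using face[OF insert.prems(2,3)] by blast
    then obtain x' where x': "x' \<in> E'" "\<forall>i\<in>I. inner (a i) x' \<le> b i"
      and x'_min: "\<forall>y\<in>E'. (\<forall>i\<in>I. inner (a i) y \<le> b i) \<longrightarrow> norm (M x') \<le> norm (M y)"
      using insert.IH[OF \<open>affine E'\<close>] by blast
    have "norm (M x') \<le> norm (M y)" if y: "y \<in> E" "\<forall>i\<in>insert j I. inner (a i) y \<le> b i" for y
    proof -
      obtain z where "z \<in> E'" "\<forall>i\<in>I. inner (a i) z \<le> b i" "norm (M z) \<le> norm (M y)"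
        using face[OF y] by blast
      then show ?thesis using x'_min by fastforce
    qed
    then show ?thesis
      using x' unfolding E'_def by (intro bexI[of _ x']) auto
  qed
qed

lemma closed_halfspace_intersection: "closed {z. \<forall>i<p. inner (a i) z \<le> (\<alpha> i :: real)}"
proof -
  have "{z. \<forall>i<p. inner (a i) z \<le> \<alpha> i} = (\<Inter>i\<in>{..<p}. {z. inner (a i) z \<le> \<alpha> i})"
    by auto
  then show ?thesis
    by (simp add: closed_INT closed_halfspace_le)
qed

definition polyhedral_cone :: "'a::real_inner set \<Rightarrow> bool" where
  "polyhedral_cone K \<longleftrightarrow> (\<exists>(p::nat) a. K = {k. \<forall>i<p. inner (a i) k \<le> 0})"

lemma cone_polyhedral_cone: "polyhedral_cone K \<Longrightarrow> cone K"
  unfolding polyhedral_cone_def cone_def by (auto simp: mult_nonneg_nonpos)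

lemma halfspace_intersection_local_cone:
  fixes p :: nat
  assumes "x \<in> Q" "Q = {z. \<forall>i<p. inner (a i) z \<le> \<alpha> i}"
  obtains K where "polyhedral_cone K" "\<And>z. z \<in> Q \<Longrightarrow> z - x \<in> K"
    "\<And>k. k \<in> K \<Longrightarrow> eventually (\<lambda>s. x + s *\<^sub>R k \<in> Q) (at_right 0)"
proof -
  \<comment> \<open>Inactive constraints are replaced by the trivial constraint 0 \<le> 0.\<close>
  define a' where "a' i = (if inner (a i) x = \<alpha> i then a i else 0)" for i
  define K where "K = {k. \<forall>i<p. inner (a' i) k \<le> 0}"
  have "polyhedral_cone K"
    unfolding K_def polyhedral_cone_def by blast
  moreover have "z - x \<in> K" if "z \<in> Q" for z
    using that assms by (auto simp: K_def a'_def inner_diff_right)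
  moreover have "eventually (\<lambda>s. x + s *\<^sub>R k \<in> Q) (at_right 0)" if "k \<in> K" for k
  proof -
    have ev: "eventually (\<lambda>s. inner (a i) (x + s *\<^sub>R k) \<le> \<alpha> i) (at_right 0)" if "i < p" for i
    proof (cases "inner (a i) x = \<alpha> i")
      case True
      have "inner (a' i) k \<le> 0" using \<open>k \<in> K\<close> \<open>i < p\<close> by (simp add: K_def)
      then have "inner (a i) k \<le> 0" using True by (simp add: a'_def)
      show ?thesis
        using eventually_at_right_less[of 0]
      proof (rule eventually_mono)
        fix s :: real assume "0 < s"
        then show "inner (a i) (x + s *\<^sub>R k) \<le> \<alpha> i"
          using \<open>inner (a i) k \<le> 0\<close> True by (simp add: inner_add_right mult_nonneg_nonpos)
      qed
    next
      case False
      then have "inner (a i) x < \<alpha> i" using assms \<open>i < p\<close> by force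
      moreover have "((\<lambda>s. inner (a i) (x + s *\<^sub>R k)) \<longlongrightarrow> inner (a i) (x + 0 *\<^sub>R k)) (at_right 0)"
        by (intro tendsto_intros)
      ultimately have "eventually (\<lambda>s. inner (a i) (x + s *\<^sub>R k) < \<alpha> i) (at_right 0)"
        by (simp add: order_tendstoD(2))
      then show ?thesis
        by (rule eventually_mono) simp
    qed
    have "eventually (\<lambda>s. \<forall>i\<in>{..<p}. inner (a i) (x + s *\<^sub>R k) \<le> \<alpha> i) (at_right 0)"
      using eventually_ball_finite[OF finite_lessThan[of p],
          where P = "\<lambda>s i. inner (a i) (x + s *\<^sub>R k) \<le> \<alpha> i" and net = "at_right 0"] ev
      by blast
    then show ?thesis
      by (rule eventually_mono) (simp add: assms(2))
  qed
  ultimately show thesis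
    by (rule that)
qed

lemma finite_closed_union_local_pieces:
  fixes x :: "'a::metric_space"
  assumes "finite F" "\<And>Q. Q \<in> F \<Longrightarrow> closed Q"
  obtains r where "r > 0" "\<And>Q z. Q \<in> F \<Longrightarrow> z \<in> Q \<Longrightarrow> dist z x < r \<Longrightarrow> x \<in> Q"
proof -
  define U where "U = \<Union>{Q\<in>F. x \<notin> Q}"
  have "open (- U)"
    unfolding U_def using assms by (intro open_Compl closed_Union) auto
  moreover have "x \<in> - U"
    by (auto simp: U_def)
  ultimately obtain r where "r > 0" and r: "ball x r \<subseteq> - U"
    using open_contains_ball by blast
  show thesis
  proof (rule that[OF \<open>r > 0\<close>])
    fix Q z assume "Q \<in> F" "z \<in> Q" "dist z x < r"
    then have "z \<notin> U" using r by (auto simp: dist_commute)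
    then show "x \<in> Q" using \<open>Q \<in> F\<close> \<open>z \<in> Q\<close> by (auto simp: U_def)
  qed
qed

lemma polyhedral_set_local_cones:
  fixes C :: "'a::euclidean_space set"
  assumes "polyhedral_set C" "x \<in> C"
  obtains r and \<K> :: "'a set set" where "r > 0" "finite \<K>"
    "\<And>K. K \<in> \<K> \<Longrightarrow> polyhedral_cone K"
    "\<And>z. z \<in> C \<Longrightarrow> dist z x < r \<Longrightarrow> \<exists>K\<in>\<K>. z - x \<in> K"
    "\<And>K k. K \<in> \<K> \<Longrightarrow> k \<in> K \<Longrightarrow> eventually (\<lambda>s. x + s *\<^sub>R k \<in> C) (at_right 0)"
proof -
  obtain F where "finite F" "C = \<Union>F"
    and pieces: "\<forall>Q\<in>F. \<exists>(p::nat) a \<alpha>. Q = {z. \<forall>i<p. inner (a i) z \<le> \<alpha> i}"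
    using assms(1) unfolding polyhedral_set_def by blast
  have "\<forall>Q\<in>{Q\<in>F. x \<in> Q}. \<exists>K. polyhedral_cone K \<and>
      (\<forall>z\<in>Q. z - x \<in> K) \<and> (\<forall>k\<in>K. eventually (\<lambda>s. x + s *\<^sub>R k \<in> Q) (at_right 0))"
  proof safe
    fix Q assume "Q \<in> F" "x \<in> Q"
    then obtain p a \<alpha> where Q: "Q = {z. \<forall>i<(p::nat). inner (a i) z \<le> \<alpha> i}"
      using pieces by blast
    obtain K where "polyhedral_cone K" "\<And>z. z \<in> Q \<Longrightarrow> z - x \<in> K"
      "\<And>k. k \<in> K \<Longrightarrow> eventually (\<lambda>s. x + s *\<^sub>R k \<in> Q) (at_right 0)"
      using halfspace_intersection_local_cone[OF \<open>x \<in> Q\<close> Q] by blast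
    then show "\<exists>K. polyhedral_cone K \<and>
      (\<forall>z\<in>Q. z - x \<in> K) \<and> (\<forall>k\<in>K. eventually (\<lambda>s. x + s *\<^sub>R k \<in> Q) (at_right 0))"
      by blast
  qed
  then obtain \<kappa> where \<kappa>: "\<forall>Q\<in>{Q\<in>F. x \<in> Q}.
      polyhedral_cone (\<kappa> Q) \<and> (\<forall>z\<in>Q. z - x \<in> \<kappa> Q) \<and>
      (\<forall>k\<in>\<kappa> Q. eventually (\<lambda>s. x + s *\<^sub>R k \<in> Q) (at_right 0))"
    by (rule bchoice[THEN exE])
  have "closed Q" if "Q \<in> F" for Q
  proof -
    obtain p a \<alpha> where "Q = {z. \<forall>i<(p::nat). inner (a i) z \<le> \<alpha> i}"
      using pieces \<open>Q \<in> F\<close> by blast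
    then show ?thesis by (simp add: closed_halfspace_intersection)
  qed
  then obtain r where "r > 0"
    and pieces_at_x: "\<And>Q z. Q \<in> F \<Longrightarrow> z \<in> Q \<Longrightarrow> dist z x < r \<Longrightarrow> x \<in> Q"
    using finite_closed_union_local_pieces[OF \<open>finite F\<close>] by blast
  show thesis
  proof (rule that[OF \<open>r > 0\<close>, of "\<kappa> ` {Q\<in>F. x \<in> Q}"])
    show "finite (\<kappa> ` {Q\<in>F. x \<in> Q})" using \<open>finite F\<close> by simp
    show "polyhedral_cone K" if "K \<in> \<kappa> ` {Q\<in>F. x \<in> Q}" for K
      using that \<kappa> by blast
    show "\<exists>K\<in>\<kappa> ` {Q\<in>F. x \<in> Q}. z - x \<in> K" if "z \<in> C" "dist z x < r" for z
    proof -
      obtain Q where "Q \<in> F" "z \<in> Q"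
        using \<open>z \<in> C\<close> \<open>C = \<Union>F\<close> by blast
      moreover have "x \<in> Q"
        using pieces_at_x calculation \<open>dist z x < r\<close> by blast
      ultimately show ?thesis using \<kappa> by blast
    qed
    show "eventually (\<lambda>s. x + s *\<^sub>R k \<in> C) (at_right 0)"
      if K: "K \<in> \<kappa> ` {Q\<in>F. x \<in> Q}" "k \<in> K" for K k
    proof -
      obtain Q where "Q \<in> F" "x \<in> Q" "K = \<kappa> Q" using K(1) by blast
      then have "eventually (\<lambda>s. x + s *\<^sub>R k \<in> Q) (at_right 0)" using \<kappa> \<open>k \<in> K\<close> by blast
      then show ?thesis
        by (rule eventually_mono) (use \<open>Q \<in> F\<close> \<open>C = \<Union>F\<close> in blast)
    qed
  qed
qed

lemma locally_polyhedral_local_cones: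
  fixes T :: "'a::euclidean_space set"
  assumes "locally_polyhedral T x"
  obtains r and \<K> :: "'a set set" where "r > 0" "finite \<K>"
    "\<And>K. K \<in> \<K> \<Longrightarrow> polyhedral_cone K"
    "\<And>z. z \<in> T \<Longrightarrow> dist z x < r \<Longrightarrow> \<exists>K\<in>\<K>. z - x \<in> K"
    "\<And>K k. K \<in> \<K> \<Longrightarrow> k \<in> K \<Longrightarrow> eventually (\<lambda>s. x + s *\<^sub>R k \<in> T) (at_right 0)"
proof -
  obtain W C where "open W" "x \<in> W" "x \<in> T" "polyhedral_set C" and TW: "T \<inter> W = C \<inter> W"
    using assms unfolding locally_polyhedral_def by blast
  then have "x \<in> C" by blast
  obtain r\<^sub>C \<K> where "r\<^sub>C > 0" "finite \<K>"
    and cones: "\<And>K. K \<in> \<K> \<Longrightarrow> polyhedral_cone K"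
    and near: "\<And>z. z \<in> C \<Longrightarrow> dist z x < r\<^sub>C \<Longrightarrow> \<exists>K\<in>\<K>. z - x \<in> K"
    and ray: "\<And>K k. K \<in> \<K> \<Longrightarrow> k \<in> K \<Longrightarrow> eventually (\<lambda>s. x + s *\<^sub>R k \<in> C) (at_right 0)"
    using polyhedral_set_local_cones[OF \<open>polyhedral_set C\<close> \<open>x \<in> C\<close>] by blast
  obtain r\<^sub>W where "r\<^sub>W > 0" "ball x r\<^sub>W \<subseteq> W"
    using \<open>open W\<close> \<open>x \<in> W\<close> open_contains_ball by blast
  show thesis
  proof (rule that[of "min r\<^sub>C r\<^sub>W" \<K>])
    show "min r\<^sub>C r\<^sub>W > 0" "finite \<K>" using \<open>r\<^sub>C > 0\<close> \<open>r\<^sub>W > 0\<close> \<open>finite \<K>\<close> by auto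
    show "polyhedral_cone K" if "K \<in> \<K>" for K
      using cones[OF that] .
    show "\<exists>K\<in>\<K>. z - x \<in> K" if z: "z \<in> T" "dist z x < min r\<^sub>C r\<^sub>W" for z
    proof -
      have "z \<in> W" using z(2) \<open>ball x r\<^sub>W \<subseteq> W\<close> by (auto simp: dist_commute)
      then have "z \<in> C" using z(1) TW by blast
      then show ?thesis using near z(2) by simp
    qed
    show "eventually (\<lambda>s. x + s *\<^sub>R k \<in> T) (at_right 0)" if "K \<in> \<K>" "k \<in> K" for K k
    proof -
      have "((\<lambda>s. x + s *\<^sub>R k) \<longlongrightarrow> x + 0 *\<^sub>R k) (at_right 0)"
        by (intro tendsto_intros)
      then have "eventually (\<lambda>s. x + s *\<^sub>R k \<in> W) (at_right 0)"
        using \<open>open W\<close> \<open>x \<in> W\<close> by (simp add: topological_tendstoD)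
      with ray[OF that] show ?thesis
        by eventually_elim (use TW in blast)
    qed
  qed
qed

lemma tangent_cone_of_cone_self:
  assumes "cone T" "x \<in> T"
  shows "x \<in> tangent_cone T x" "- x \<in> tangent_cone T x"
proof -
  have ev: "eventually (\<lambda>s. 0 < s \<and> s < 1) (at_right (0::real))"
    by (auto simp: eventually_at_right_field intro!: exI[of _ 1])
  have "(1 + s) *\<^sub>R x \<in> T" "(1 - s) *\<^sub>R x \<in> T" if "0 < s \<and> s < 1" for s
    using assms that unfolding cone_def by auto
  then have "eventually (\<lambda>s. x + s *\<^sub>R x \<in> T) (at_right 0)"
    "eventually (\<lambda>s. x + s *\<^sub>R (- x) \<in> T) (at_right 0)"
    using ev by (auto elim!: eventually_mono simp: algebra_simps)
  then show "x \<in> tangent_cone T x" "- x \<in> tangent_cone T x"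
    using \<open>x \<in> T\<close> by (auto intro: tangent_coneI_ray)
qed

lemma nearest_point_residual_in_polar_tangent_cone:
  fixes p :: "'a::real_inner"
  assumes "x \<in> S" and nearest: "\<And>y. y \<in> S \<Longrightarrow> norm (p - x) \<le> norm (p - y)"
  shows "p - x \<in> polar_cone (tangent_cone S x)"
proof -
  have "((\<lambda>y. (norm (y - p))\<^sup>2) has_derivative (\<lambda>h. 2 * inner (x - p) h)) (at x within S)"
    by (rule has_derivative_norm_sq_diff[OF bounded_linear_ident])
  then have "((\<lambda>y. (norm (y - p))\<^sup>2) has_derivative (\<lambda>h. inner (2 *\<^sub>R (x - p)) h)) (at x within S)"
    by simp
  moreover have "(norm (x - p))\<^sup>2 \<le> (norm (y - p))\<^sup>2" if "y \<in> S" for y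
    using nearest[OF that] by (simp add: norm_minus_commute power_mono)
  ultimately have "- (2 *\<^sub>R (x - p)) \<in> polar_cone (tangent_cone S x)"
    by (rule minimizer_neg_gradient_in_polar_tangent_cone[OF \<open>x \<in> S\<close>])
  then have "(1 / 2) *\<^sub>R (- (2 *\<^sub>R (x - p))) \<in> polar_cone (tangent_cone S x)"
    by (rule polar_cone_scaleR) simp
  then show ?thesis by (simp add: algebra_simps)
qed

lemma hyperplane_least_squares_residual_parallel:
  fixes A :: "real^'d^'s" and g :: "real^'d"
  assumes "g \<noteq> 0" "inner g u\<^sub>0 = c"
    and min: "\<And>u. inner g u = c \<Longrightarrow> norm (A *v u\<^sub>0 - t) \<le> norm (A *v u - t)"
  defines "x \<equiv> transpose A *v (A *v u\<^sub>0 - t)"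
  shows "x = (inner x g / inner g g) *\<^sub>R g"
proof (rule orthogonal_to_hyperplane_imp_parallel[OF \<open>g \<noteq> 0\<close>])
  let ?H = "{u. inner g u = c}"
  have "((\<lambda>u. (norm (A *v u - t))\<^sup>2) has_derivative (\<lambda>h. 2 * inner (A *v u\<^sub>0 - t) (A *v h)))
      (at u\<^sub>0 within ?H)"
    by (rule has_derivative_norm_sq_diff[OF matrix_vector_mul_bounded_linear])
  then have "((\<lambda>u. (norm (A *v u - t))\<^sup>2) has_derivative (\<lambda>h. inner (2 *\<^sub>R x) h)) (at u\<^sub>0 within ?H)"
    by (simp add: x_def dot_lmul_matrix)
  moreover have "(norm (A *v u\<^sub>0 - t))\<^sup>2 \<le> (norm (A *v u - t))\<^sup>2" if "u \<in> ?H" for u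
    using min that by (simp add: power_mono)
  ultimately have normal: "- (2 *\<^sub>R x) \<in> polar_cone (tangent_cone ?H u\<^sub>0)"
    using \<open>inner g u\<^sub>0 = c\<close> by (intro minimizer_neg_gradient_in_polar_tangent_cone) auto
  fix h assume "inner g h = 0"
  then have "u\<^sub>0 + s *\<^sub>R h \<in> ?H" "u\<^sub>0 + s *\<^sub>R (- h) \<in> ?H" for s
    using \<open>inner g u\<^sub>0 = c\<close> by (simp_all add: inner_add_right inner_diff_right)
  then have "h \<in> tangent_cone ?H u\<^sub>0" "- h \<in> tangent_cone ?H u\<^sub>0"
    using \<open>inner g u\<^sub>0 = c\<close> by (auto intro!: tangent_coneI_ray always_eventually)
  then have "inner (- (2 *\<^sub>R x)) h = 0"
    by (rule polar_cone_orthogonal[OF normal])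
  then show "inner x h = 0" by simp
qed

lemma multiplier_from_cone_gap_minimizer:
  fixes A :: "real^'d^'s" and g :: "real^'d"
  assumes "cone T"
    and nonneg: "\<And>u. A *v u \<in> T \<Longrightarrow> 0 \<le> inner g u"
    and "inner g u\<^sub>0 = -1" "t\<^sub>0 \<in> T"
    and min: "\<And>u t. inner g u = -1 \<Longrightarrow> t \<in> T \<Longrightarrow> norm (A *v u\<^sub>0 - t\<^sub>0) \<le> norm (A *v u - t)"
  shows "\<exists>w\<in>polar_cone (tangent_cone T t\<^sub>0). g + transpose A *v w = 0"
proof -
  define r where "r = A *v u\<^sub>0 - t\<^sub>0"
  have "r \<noteq> 0"
  proof
    assume "r = 0"
    then have "A *v u\<^sub>0 \<in> T" using \<open>t\<^sub>0 \<in> T\<close> by (simp add: r_def)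
    then show False using nonneg[of u\<^sub>0] \<open>inner g u\<^sub>0 = -1\<close> by simp
  qed
  have r_normal: "r \<in> polar_cone (tangent_cone T t\<^sub>0)"
    unfolding r_def using \<open>t\<^sub>0 \<in> T\<close> min[OF \<open>inner g u\<^sub>0 = -1\<close>]
    by (rule nearest_point_residual_in_polar_tangent_cone)
  have "inner r t\<^sub>0 = 0"
    using tangent_cone_of_cone_self[OF \<open>cone T\<close> \<open>t\<^sub>0 \<in> T\<close>] by (rule polar_cone_orthogonal[OF r_normal])
  have "g \<noteq> 0" using \<open>inner g u\<^sub>0 = -1\<close> by auto
  define c where "c = inner (transpose A *v r) g / inner g g"
  have parallel: "transpose A *v r = c *\<^sub>R g"
    unfolding c_def r_def using \<open>g \<noteq> 0\<close> \<open>inner g u\<^sub>0 = -1\<close> min \<open>t\<^sub>0 \<in> T\<close>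
    by (intro hyperplane_least_squares_residual_parallel) auto
  have "- c = inner (transpose A *v r) u\<^sub>0"
    unfolding parallel using \<open>inner g u\<^sub>0 = -1\<close> by simp
  also have "\<dots> = inner r (r + t\<^sub>0)"
    by (simp add: dot_lmul_matrix r_def)
  also have "\<dots> = inner r r"
    using \<open>inner r t\<^sub>0 = 0\<close> by (simp add: inner_add_right)
  finally have "c = - inner r r" by simp
  moreover have "inner r r > 0" using \<open>r \<noteq> 0\<close> by simp
  ultimately have "g + transpose A *v ((1 / inner r r) *\<^sub>R r) = 0"
    by (simp only: matrix_vector_mult_scaleR parallel) simp
  moreover have "(1 / inner r r) *\<^sub>R r \<in> polar_cone (tangent_cone T t\<^sub>0)"
    using r_normal \<open>inner r r > 0\<close> by (simp add: polar_cone_scaleR)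
  ultimately show ?thesis by blast
qed

definition cone_gap :: "real^'d^'s \<Rightarrow> real^'d \<Rightarrow> (real^'s) set \<Rightarrow> real" where
  "cone_gap A g T = Inf {norm (A *v u - t) | u t. inner g u = -1 \<and> t \<in> T}"

lemma cone_gap_le: "inner g u = -1 \<Longrightarrow> t \<in> T \<Longrightarrow> cone_gap A g T \<le> norm (A *v u - t)"
  unfolding cone_gap_def by (intro cInf_lower) (auto intro: bdd_belowI[of _ 0])

lemma feasible_pair_orthogonal_to_lineality:
  fixes A :: "real^'d^'s" and g :: "real^'d"
  assumes "inner g u = -1" "t \<in> T"
  obtains u' t' where "inner g u' = -1" "t' \<in> T" "A *v u' - t' = A *v u - t"
    "\<And>n. inner g n = 0 \<Longrightarrow> A *v n \<in> Lsp T \<Longrightarrow> inner u' n = 0"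
proof -
  define N where "N = {n. inner g n = 0} \<inter> {n. A *v n \<in> Lsp T}"
  have "subspace N"
    unfolding N_def
    by (intro subspace_inter subspace_hyperplane
        linear_subspace_linear_preimage[OF matrix_vector_mul_linear subspace_Lsp])
  then have "span N = N"
    by (rule span_eq_iff[THEN iffD2])
  obtain y z where "y \<in> N" and z_orth: "\<And>n. n \<in> N \<Longrightarrow> inner z n = 0" and "u = y + z"
    using orthogonal_subspace_decomp_exists[of N u] unfolding \<open>span N = N\<close> orthogonal_def by blast
  then have "A *v y \<in> Lsp T" "inner g y = 0"
    by (simp_all add: N_def)
  then have "t + (-1) *\<^sub>R (A *v y) \<in> T"
    using \<open>t \<in> T\<close> by (simp only: Lsp_translate)
  show thesis
  proof (rule that[of z "t - A *v y"])
    show "inner g z = -1"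
      using assms(1) \<open>u = y + z\<close> \<open>inner g y = 0\<close> by (simp add: inner_add_right)
    show "t - A *v y \<in> T"
      using \<open>t + (-1) *\<^sub>R (A *v y) \<in> T\<close> by simp
    show "A *v z - (t - A *v y) = A *v u - t"
      using \<open>u = y + z\<close> by (simp add: matrix_vector_right_distrib)
    show "inner z n = 0" if "inner g n = 0" "A *v n \<in> Lsp T" for n
      using z_orth that by (simp add: N_def)
  qed
qed

lemma cone_gap_minimizing_sequence:
  fixes A :: "real^'d^'s" and g :: "real^'d"
  assumes "g \<noteq> 0" "T \<noteq> {}"
  obtains u t where "\<And>k. inner g (u k) = -1" "\<And>k. t k \<in> T"
    "\<And>k n. inner g n = 0 \<Longrightarrow> A *v n \<in> Lsp T \<Longrightarrow> inner (u k) n = 0"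
    "(\<lambda>k. norm (A *v u k - t k)) \<longlonglongrightarrow> cone_gap A g T"
proof -
  let ?G = "{norm (A *v u - t) | u t. inner g u = -1 \<and> t \<in> T}"
  obtain t\<^sub>0 where "t\<^sub>0 \<in> T" using \<open>T \<noteq> {}\<close> by blast
  moreover have "inner g ((- 1 / inner g g) *\<^sub>R g) = -1" using \<open>g \<noteq> 0\<close> by simp
  ultimately have "?G \<noteq> {}" by blast
  moreover have "bdd_below ?G" by (rule bdd_belowI[of _ 0]) auto
  ultimately have "Inf ?G \<in> closure ?G" by (rule closure_contains_Inf)
  then obtain d where d: "\<And>k. d k \<in> ?G" and "d \<longlonglongrightarrow> cone_gap A g T"
    unfolding closure_sequential cone_gap_def by blast
  have "\<forall>k. \<exists>u t. inner g u = -1 \<and> t \<in> T \<and>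
      (\<forall>n. inner g n = 0 \<longrightarrow> A *v n \<in> Lsp T \<longrightarrow> inner u n = 0) \<and> norm (A *v u - t) = d k"
  proof
    fix k
    obtain u t where "inner g u = -1" "t \<in> T" "d k = norm (A *v u - t)"
      using d[of k] by blast
    moreover obtain u' t' where "inner g u' = -1" "t' \<in> T" "A *v u' - t' = A *v u - t"
      "\<And>n. inner g n = 0 \<Longrightarrow> A *v n \<in> Lsp T \<Longrightarrow> inner u' n = 0"
      using feasible_pair_orthogonal_to_lineality[where A = A, OF calculation(1,2)] by blast
    ultimately show "\<exists>u t. inner g u = -1 \<and> t \<in> T \<and>
        (\<forall>n. inner g n = 0 \<longrightarrow> A *v n \<in> Lsp T \<longrightarrow> inner u n = 0) \<and> norm (A *v u - t) = d k"
      by (intro exI[of _ u'] exI[of _ t']) simp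
  qed
  then obtain u t where "\<And>k. inner g (u k) = -1" "\<And>k. t k \<in> T"
    "\<And>k n. inner g n = 0 \<Longrightarrow> A *v n \<in> Lsp T \<Longrightarrow> inner (u k) n = 0"
    "\<And>k. norm (A *v u k - t k) = d k"
    by metis
  with \<open>d \<longlonglongrightarrow> cone_gap A g T\<close> show thesis
    by (intro that[of u t]) simp_all
qed

lemma normalized_convergent_subsequence:
  fixes x :: "nat \<Rightarrow> 'a::{real_normed_vector, heine_borel}"
  defines "\<sigma> \<equiv> \<lambda>k. 1 / (1 + norm (x k))"
  obtains r s z where "strict_mono r" "(\<lambda>k. \<sigma> (r k)) \<longlonglongrightarrow> s"
    "(\<lambda>k. \<sigma> (r k) *\<^sub>R x (r k)) \<longlonglongrightarrow> z" "norm z = 1 - s"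
proof -
  have \<sigma>_pos: "0 < \<sigma> k" and "\<sigma> k \<le> 1" for k
    using add_pos_nonneg[OF zero_less_one norm_ge_zero[of "x k"]] by (simp_all add: \<sigma>_def)
  have norm_scaled: "norm (\<sigma> k *\<^sub>R x k) = 1 - \<sigma> k" for k
    using add_pos_nonneg[OF zero_less_one norm_ge_zero[of "x k"]] by (simp add: \<sigma>_def field_simps)
  have "range (\<lambda>k. (\<sigma> k, \<sigma> k *\<^sub>R x k)) \<subseteq> cball 0 1 \<times> cball 0 1"
  proof
    fix w assume "w \<in> range (\<lambda>k. (\<sigma> k, \<sigma> k *\<^sub>R x k))"
    then obtain k where "w = (\<sigma> k, \<sigma> k *\<^sub>R x k)" by blast
    moreover have "\<bar>\<sigma> k\<bar> \<le> 1" using \<sigma>_pos[of k] \<open>\<sigma> k \<le> 1\<close> by simp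
    ultimately show "w \<in> cball 0 1 \<times> cball 0 1"
      using norm_scaled[of k] \<sigma>_pos[of k] by simp
  qed
  then have "bounded (range (\<lambda>k. (\<sigma> k, \<sigma> k *\<^sub>R x k)))"
    by (rule bounded_subset[rotated]) (intro bounded_Times bounded_cball)
  then obtain r l where "strict_mono r" and lim: "((\<lambda>k. (\<sigma> k, \<sigma> k *\<^sub>R x k)) \<circ> r) \<longlonglongrightarrow> l"
    using bounded_imp_convergent_subsequence by blast
  have lim_\<sigma>: "(\<lambda>k. \<sigma> (r k)) \<longlonglongrightarrow> fst l" and lim_x: "(\<lambda>k. \<sigma> (r k) *\<^sub>R x (r k)) \<longlonglongrightarrow> snd l"
    using tendsto_fst[OF lim] tendsto_snd[OF lim] by (simp_all add: o_def)
  have "(\<lambda>k. norm (\<sigma> (r k) *\<^sub>R x (r k))) \<longlonglongrightarrow> norm (snd l)"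
    by (rule tendsto_norm[OF lim_x])
  moreover have "(\<lambda>k. norm (\<sigma> (r k) *\<^sub>R x (r k))) \<longlonglongrightarrow> 1 - fst l"
    unfolding norm_scaled by (rule tendsto_diff[OF tendsto_const lim_\<sigma>])
  ultimately have "norm (snd l) = 1 - fst l"
    by (rule LIMSEQ_unique)
  with \<open>strict_mono r\<close> lim_\<sigma> lim_x show thesis
    by (rule that)
qed

lemma cone_gap_feasible_limit:
  fixes A :: "real^'d^'s" and g :: "real^'d"
  assumes "closed T" and feas: "\<And>k. inner g (u k) = -1" "\<And>k. t k \<in> T"
    and "u \<longlonglongrightarrow> u\<^sub>0" "t \<longlonglongrightarrow> t\<^sub>0"
  shows "inner g u\<^sub>0 = -1" "t\<^sub>0 \<in> T" "(\<lambda>k. norm (A *v u k - t k)) \<longlonglongrightarrow> norm (A *v u\<^sub>0 - t\<^sub>0)"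
proof -
  have "(\<lambda>k. inner g (u k)) \<longlonglongrightarrow> inner g u\<^sub>0"
    by (rule tendsto_inner[OF tendsto_const \<open>u \<longlonglongrightarrow> u\<^sub>0\<close>])
  then show "inner g u\<^sub>0 = -1"
    using feas(1) by (simp add: LIMSEQ_const_iff)
  show "t\<^sub>0 \<in> T"
    using closed_sequentially[OF \<open>closed T\<close> _ \<open>t \<longlonglongrightarrow> t\<^sub>0\<close>] feas(2) by blast
  show "(\<lambda>k. norm (A *v u k - t k)) \<longlonglongrightarrow> norm (A *v u\<^sub>0 - t\<^sub>0)"
    by (intro tendsto_norm tendsto_diff \<open>t \<longlonglongrightarrow> t\<^sub>0\<close>
        bounded_linear.tendsto[OF matrix_vector_mul_bounded_linear \<open>u \<longlonglongrightarrow> u\<^sub>0\<close>])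
qed

lemma minimizing_sequence_diverges:
  fixes A :: "real^'d^'s" and g :: "real^'d"
  assumes "closed T"
    and feas: "\<And>k. inner g (u k) = -1" "\<And>k. t k \<in> T"
    and lim: "(\<lambda>k. norm (A *v u k - t k)) \<longlonglongrightarrow> \<delta>"
    and not_attained: "\<And>u t. inner g u = -1 \<Longrightarrow> t \<in> T \<Longrightarrow> \<delta> < norm (A *v u - t)"
  obtains r \<sigma> y p where "strict_mono r" "\<And>k. \<sigma> k > 0" "\<sigma> \<longlonglongrightarrow> 0"
    "(\<lambda>k. \<sigma> k *\<^sub>R u (r k)) \<longlonglongrightarrow> y" "(\<lambda>k. \<sigma> k *\<^sub>R t (r k)) \<longlonglongrightarrow> p" "norm (y, p) = 1"
proof -
  define \<sigma> where "\<sigma> k = 1 / (1 + norm (u k, t k))" for k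
  have \<sigma>_pos: "0 < \<sigma> k" for k
    using add_pos_nonneg[OF zero_less_one norm_ge_zero[of "(u k, t k)"]] by (simp add: \<sigma>_def)
  obtain r s z where "strict_mono r" and lim_\<sigma>: "(\<lambda>k. \<sigma> (r k)) \<longlonglongrightarrow> s"
    and lim_z: "(\<lambda>k. \<sigma> (r k) *\<^sub>R (u (r k), t (r k))) \<longlonglongrightarrow> z" and "norm z = 1 - s"
    using normalized_convergent_subsequence[of "\<lambda>k. (u k, t k)"] unfolding \<sigma>_def by blast
  define y p where "y = fst z" and "p = snd z"
  have lim_u: "(\<lambda>k. \<sigma> (r k) *\<^sub>R u (r k)) \<longlonglongrightarrow> y" and lim_t: "(\<lambda>k. \<sigma> (r k) *\<^sub>R t (r k)) \<longlonglongrightarrow> p"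
    using tendsto_fst[OF lim_z] tendsto_snd[OF lim_z] by (simp_all add: y_def p_def)
  have "s = 0"
  proof (rule ccontr)
    \<comment> \<open>Otherwise the subsequence itself converges, to a feasible pair attaining the gap.\<close>
    assume "s \<noteq> 0"
    have "(\<lambda>k. (1 / \<sigma> (r k)) *\<^sub>R (\<sigma> (r k) *\<^sub>R u (r k))) \<longlonglongrightarrow> (1 / s) *\<^sub>R y"
      "(\<lambda>k. (1 / \<sigma> (r k)) *\<^sub>R (\<sigma> (r k) *\<^sub>R t (r k))) \<longlonglongrightarrow> (1 / s) *\<^sub>R p"
      by (intro tendsto_scaleR tendsto_divide tendsto_const lim_\<sigma> lim_u lim_t \<open>s \<noteq> 0\<close>)+
    then have "(\<lambda>k. u (r k)) \<longlonglongrightarrow> (1 / s) *\<^sub>R y" "(\<lambda>k. t (r k)) \<longlonglongrightarrow> (1 / s) *\<^sub>R p"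
      using \<sigma>_pos by (simp_all add: less_imp_neq[symmetric])
    note limit = cone_gap_feasible_limit[OF \<open>closed T\<close> feas(1) feas(2) this]
    have "(\<lambda>k. norm (A *v u (r k) - t (r k))) \<longlonglongrightarrow> \<delta>"
      using LIMSEQ_subseq_LIMSEQ[OF lim \<open>strict_mono r\<close>] by (simp add: o_def)
    with limit(3) have "norm (A *v ((1 / s) *\<^sub>R y) - (1 / s) *\<^sub>R p) = \<delta>"
      by (rule LIMSEQ_unique)
    with not_attained[OF limit(1,2)] show False by simp
  qed
  show thesis
    using \<open>strict_mono r\<close> \<sigma>_pos lim_\<sigma> lim_u lim_t \<open>norm z = 1 - s\<close>
    unfolding \<open>s = 0\<close> by (intro that[of r "\<lambda>k. \<sigma> (r k)" y p]) (simp_all add: y_def p_def)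
qed

lemma minimizing_sequence_escape_direction:
  fixes A :: "real^'d^'s" and g :: "real^'d"
  assumes "closed T" "cone T"
    and feas: "\<And>k. inner g (u k) = -1" "\<And>k. t k \<in> T"
    and lim: "(\<lambda>k. norm (A *v u k - t k)) \<longlonglongrightarrow> \<delta>"
    and not_attained: "\<And>u t. inner g u = -1 \<Longrightarrow> t \<in> T \<Longrightarrow> \<delta> < norm (A *v u - t)"
  obtains y r \<sigma> where "y \<noteq> 0" "inner g y = 0" "A *v y \<in> T" "strict_mono r" "\<And>k. \<sigma> k > 0"
    "(\<lambda>k. \<sigma> k *\<^sub>R u (r k)) \<longlonglongrightarrow> y" "(\<lambda>k. \<sigma> k *\<^sub>R t (r k)) \<longlonglongrightarrow> A *v y"
proof -
  obtain r \<sigma> y p where "strict_mono r" and \<sigma>_pos: "\<And>k. \<sigma> k > 0" and "\<sigma> \<longlonglongrightarrow> 0"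
    and lim_u: "(\<lambda>k. \<sigma> k *\<^sub>R u (r k)) \<longlonglongrightarrow> y" and lim_t: "(\<lambda>k. \<sigma> k *\<^sub>R t (r k)) \<longlonglongrightarrow> p"
    and "norm (y, p) = 1"
    using minimizing_sequence_diverges[OF \<open>closed T\<close> feas lim not_attained] by blast
  have "(\<lambda>k. norm (A *v u (r k) - t (r k))) \<longlonglongrightarrow> \<delta>"
    using LIMSEQ_subseq_LIMSEQ[OF lim \<open>strict_mono r\<close>] by (simp add: o_def)
  moreover have "A *v (\<sigma> k *\<^sub>R u (r k)) - \<sigma> k *\<^sub>R t (r k) = \<sigma> k *\<^sub>R (A *v u (r k) - t (r k))" for k
    by (simp add: matrix_vector_mult_scaleR scaleR_diff_right)
  ultimately have "(\<lambda>k. norm (A *v (\<sigma> k *\<^sub>R u (r k)) - \<sigma> k *\<^sub>R t (r k))) \<longlonglongrightarrow> 0 * \<delta>"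
    using tendsto_mult[OF \<open>\<sigma> \<longlonglongrightarrow> 0\<close>] \<sigma>_pos by (simp add: abs_of_pos)
  then have "(\<lambda>k. A *v (\<sigma> k *\<^sub>R u (r k)) - \<sigma> k *\<^sub>R t (r k)) \<longlonglongrightarrow> 0"
    by (simp only: mult_zero_left tendsto_norm_zero_iff)
  moreover have "(\<lambda>k. A *v (\<sigma> k *\<^sub>R u (r k)) - \<sigma> k *\<^sub>R t (r k)) \<longlonglongrightarrow> A *v y - p"
    by (intro tendsto_diff lim_t bounded_linear.tendsto[OF matrix_vector_mul_bounded_linear lim_u])
  ultimately have "A *v y - p = 0"
    by (rule LIMSEQ_unique[rotated])
  then have "p = A *v y" by simp
  have "\<sigma> k *\<^sub>R t (r k) \<in> T" for k
    using \<open>cone T\<close> feas(2) less_imp_le[OF \<sigma>_pos[of k]] unfolding cone_def by blast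
  then have "A *v y \<in> T"
    using closed_sequentially[OF \<open>closed T\<close> _ lim_t] \<open>p = A *v y\<close> by blast
  moreover have "(\<lambda>k. inner g (\<sigma> k *\<^sub>R u (r k))) \<longlonglongrightarrow> inner g y"
    by (rule tendsto_inner[OF tendsto_const lim_u])
  then have "inner g y = 0"
    using tendsto_minus[OF \<open>\<sigma> \<longlonglongrightarrow> 0\<close>] feas(1) LIMSEQ_unique by fastforce
  moreover have "y \<noteq> 0"
    using \<open>norm (y, p) = 1\<close> \<open>p = A *v y\<close> by auto
  ultimately show thesis
    using that[OF _ _ _ \<open>strict_mono r\<close> \<sigma>_pos lim_u] lim_t \<open>p = A *v y\<close> by blast
qed

lemma frequently_le_tendsto_imp_le:
  fixes f :: "'a \<Rightarrow> 'b::linorder_topology"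
  assumes "(f \<longlongrightarrow> l) F" "frequently (\<lambda>x. c \<le> f x) F"
  shows "c \<le> l"
proof (rule ccontr)
  assume "\<not> c \<le> l"
  then have "eventually (\<lambda>x. f x < c) F"
    by (intro order_tendstoD(2)[OF assms(1)]) simp
  then have "eventually (\<lambda>x. \<not> c \<le> f x) F"
    by (rule eventually_mono) simp
  then show False
    using assms(2) by (simp add: frequently_def)
qed

lemma polyhedral_cone_gap_attained:
  fixes A :: "real^'d^'s" and g :: "real^'d"
  assumes "polyhedral_cone K" "inner g v\<^sub>0 = -1" "k\<^sub>0 \<in> K"
  obtains v k where "inner g v = -1" "k \<in> K"
    "\<And>v' k'. inner g v' = -1 \<Longrightarrow> k' \<in> K \<Longrightarrow> norm (A *v v - k) \<le> norm (A *v v' - k')"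
proof -
  obtain p a where K: "K = {k. \<forall>i<(p::nat). inner (a i) k \<le> 0}"
    using \<open>polyhedral_cone K\<close> unfolding polyhedral_cone_def by blast
  define M where "M x = A *v fst x - snd x" for x :: "(real^'d) \<times> (real^'s)"
  define E where "E = {x :: (real^'d) \<times> (real^'s). inner (g, 0) x = -1}"
  define b where "b i = (0 :: real^'d, a i)" for i
  have "linear M"
    unfolding M_def by (rule linearI) (simp_all add: algebra_simps)
  have "affine E"
    unfolding E_def by (rule affine_hyperplane)
  have feasible_iff: "x \<in> E \<and> (\<forall>i\<in>{..<p}. inner (b i) x \<le> 0) \<longleftrightarrow> inner g (fst x) = -1 \<and> snd x \<in> K"
    for x
    by (cases x) (auto simp: E_def b_def K)
  have feasible\<^sub>0: "(v\<^sub>0, k\<^sub>0) \<in> E" "\<forall>i\<in>{..<p}. inner (b i) (v\<^sub>0, k\<^sub>0) \<le> 0"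
    using feasible_iff[of "(v\<^sub>0, k\<^sub>0)"] assms(2,3) by simp_all
  obtain x where "x \<in> E" "\<forall>i\<in>{..<p}. inner (b i) x \<le> 0"
    and x_min: "\<forall>y\<in>E. (\<forall>i\<in>{..<p}. inner (b i) y \<le> 0) \<longrightarrow> norm (M x) \<le> norm (M y)"
    using norm_linear_attains_min_on_polyhedron[OF \<open>linear M\<close> finite_lessThan \<open>affine E\<close> feasible\<^sub>0]
    by blast
  show thesis
  proof (rule that[of "fst x" "snd x"])
    show "inner g (fst x) = -1" "snd x \<in> K"
      using feasible_iff[of x] \<open>x \<in> E\<close> \<open>\<forall>i\<in>{..<p}. inner (b i) x \<le> 0\<close> by simp_all
    show "norm (A *v fst x - snd x) \<le> norm (A *v v' - k')" if "inner g v' = -1" "k' \<in> K" for v' k'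
    proof -
      have "(v', k') \<in> E" "\<forall>i\<in>{..<p}. inner (b i) (v', k') \<le> 0"
        using feasible_iff[of "(v', k')"] that by simp_all
      then show ?thesis
        using x_min by (fastforce simp: M_def)
    qed
  qed
qed

lemma locally_polyhedral_frequently_in_cone:
  fixes T :: "'a::euclidean_space set"
  assumes "locally_polyhedral T x" "\<And>k. z k \<in> T" "z \<longlonglongrightarrow> x"
  obtains K where "polyhedral_cone K"
    "frequently (\<lambda>k. z k - x \<in> K) sequentially"
    "\<And>w. w \<in> K \<Longrightarrow> eventually (\<lambda>s. x + s *\<^sub>R w \<in> T) (at_right 0)"
proof -
  obtain \<rho> \<K> where "\<rho> > 0" "finite \<K>"
    and cones: "\<And>K. K \<in> \<K> \<Longrightarrow> polyhedral_cone K"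
    and near: "\<And>w. w \<in> T \<Longrightarrow> dist w x < \<rho> \<Longrightarrow> \<exists>K\<in>\<K>. w - x \<in> K"
    and ray: "\<And>K w. K \<in> \<K> \<Longrightarrow> w \<in> K \<Longrightarrow> eventually (\<lambda>s. x + s *\<^sub>R w \<in> T) (at_right 0)"
    using locally_polyhedral_local_cones[OF assms(1)] by blast
  have "eventually (\<lambda>k. dist (z k) x < \<rho>) sequentially"
    using tendstoD[OF assms(3) \<open>\<rho> > 0\<close>] .
  then have "eventually (\<lambda>k. \<exists>K\<in>\<K>. z k - x \<in> K) sequentially"
    by (rule eventually_mono) (rule near[OF assms(2)])
  then have freq_any: "frequently (\<lambda>k. \<exists>K\<in>\<K>. z k - x \<in> K) sequentially"
    by (rule eventually_frequently[OF trivial_limit_sequentially])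
  obtain K where "K \<in> \<K>" "frequently (\<lambda>k. z k - x \<in> K) sequentially"
    using frequently_bex_finite[OF \<open>finite \<K>\<close> freq_any] by blast
  with cones ray show thesis
    by (intro that[of K]) blast+
qed

lemma cone_gap_attained_if_locally_polyhedral:
  fixes A :: "real^'d^'s" and g :: "real^'d"
  assumes "cone T" and poly: "locally_polyhedral T (A *v y)" and "inner g y = 0"
    and feas: "\<And>k. inner g (u k) = -1" "\<And>k. t k \<in> T"
    and lim: "(\<lambda>k. norm (A *v u k - t k)) \<longlonglongrightarrow> \<delta>"
    and \<sigma>_pos: "\<And>k. \<sigma> k > 0" and lim_t: "(\<lambda>k. \<sigma> k *\<^sub>R t k) \<longlonglongrightarrow> A *v y"
  obtains u' t' where "inner g u' = -1" "t' \<in> T" "norm (A *v u' - t') \<le> \<delta>"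
proof -
  let ?p = "A *v y"
  have scaled_in_T: "\<sigma> k *\<^sub>R t k \<in> T" for k
    using \<open>cone T\<close> feas(2)[of k] less_imp_le[OF \<sigma>_pos[of k]] unfolding cone_def by blast
  obtain K where "polyhedral_cone K"
    and freq: "frequently (\<lambda>k. \<sigma> k *\<^sub>R t k - ?p \<in> K) sequentially"
    and ray: "\<And>w. w \<in> K \<Longrightarrow> eventually (\<lambda>s. ?p + s *\<^sub>R w \<in> T) (at_right 0)"
    using locally_polyhedral_frequently_in_cone[OF poly scaled_in_T lim_t] by blast
  have shifted: "inner g (u k - (1 / \<sigma> k) *\<^sub>R y) = -1 \<and> t k - (1 / \<sigma> k) *\<^sub>R ?p \<in> K \<and>
      A *v (u k - (1 / \<sigma> k) *\<^sub>R y) - (t k - (1 / \<sigma> k) *\<^sub>R ?p) = A *v u k - t k"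
    if "\<sigma> k *\<^sub>R t k - ?p \<in> K" for k
  proof (intro conjI)
    show "inner g (u k - (1 / \<sigma> k) *\<^sub>R y) = -1"
      using feas(1)[of k] \<open>inner g y = 0\<close> by (simp add: inner_diff_right)
    have "t k - (1 / \<sigma> k) *\<^sub>R ?p = (1 / \<sigma> k) *\<^sub>R (\<sigma> k *\<^sub>R t k - ?p)"
      using \<sigma>_pos[of k] by (simp add: algebra_simps)
    then show "t k - (1 / \<sigma> k) *\<^sub>R ?p \<in> K"
      using that \<sigma>_pos[of k] cone_polyhedral_cone[OF \<open>polyhedral_cone K\<close>] unfolding cone_def by simp
    show "A *v (u k - (1 / \<sigma> k) *\<^sub>R y) - (t k - (1 / \<sigma> k) *\<^sub>R ?p) = A *v u k - t k"
      by (simp add: algebra_simps)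
  qed
  obtain k\<^sub>0 where "\<sigma> k\<^sub>0 *\<^sub>R t k\<^sub>0 - ?p \<in> K"
    using frequently_ex[OF freq] by blast
  then obtain v k where "inner g v = -1" "k \<in> K"
    and min: "\<And>v' k'. inner g v' = -1 \<Longrightarrow> k' \<in> K \<Longrightarrow> norm (A *v v - k) \<le> norm (A *v v' - k')"
    using polyhedral_cone_gap_attained[where A = A, OF \<open>polyhedral_cone K\<close>
        conjunct1[OF shifted] conjunct1[OF conjunct2[OF shifted]]]
    by blast
  have "frequently (\<lambda>j. norm (A *v v - k) \<le> norm (A *v u j - t j)) sequentially"
    using freq
  proof (rule frequently_elim1)
    fix j assume "\<sigma> j *\<^sub>R t j - ?p \<in> K"
    from shifted[OF this] show "norm (A *v v - k) \<le> norm (A *v u j - t j)"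
      using min by metis
  qed
  then have "norm (A *v v - k) \<le> \<delta>"
    by (rule frequently_le_tendsto_imp_le[OF lim])
  obtain s where "s > 0" "?p + s *\<^sub>R k \<in> T"
    using eventually_happens'[OF trivial_limit_at_right_real
        eventually_conj[OF ray[OF \<open>k \<in> K\<close>] eventually_at_right_less]]
    by blast
  \<comment> \<open>Scaling back along the ray through ?p lifts the minimizer over K to a feasible pair.\<close>
  then have "(1 / s) *\<^sub>R (?p + s *\<^sub>R k) \<in> T"
    using \<open>cone T\<close> unfolding cone_def by simp
  moreover have "inner g ((1 / s) *\<^sub>R y + v) = -1"
    using \<open>inner g y = 0\<close> \<open>inner g v = -1\<close> by (simp add: inner_add_right)
  moreover have "A *v ((1 / s) *\<^sub>R y + v) - (1 / s) *\<^sub>R (?p + s *\<^sub>R k) = A *v v - k"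
    using \<open>s > 0\<close> by (simp add: algebra_simps)
  ultimately show thesis
    using \<open>norm (A *v v - k) \<le> \<delta>\<close>
    by (intro that[of "(1 / s) *\<^sub>R y + v" "(1 / s) *\<^sub>R (?p + s *\<^sub>R k)"]) simp_all
qed

lemma degenerate_direction_if_cone_gap_not_attained:
  fixes A :: "real^'d^'s" and g :: "real^'d"
  assumes "closed T" "cone T" "T \<noteq> {}" "g \<noteq> 0"
    and not_attained: "\<And>u t. inner g u = -1 \<Longrightarrow> t \<in> T \<Longrightarrow> cone_gap A g T < norm (A *v u - t)"
  obtains y where "A *v y \<in> T" "A *v y \<notin> Lsp T" "inner g y = 0" "\<not> locally_polyhedral T (A *v y)"
proof -
  obtain u t where feas: "\<And>k. inner g (u k) = -1" "\<And>k. t k \<in> T"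
    and orth: "\<And>k n. inner g n = 0 \<Longrightarrow> A *v n \<in> Lsp T \<Longrightarrow> inner (u k) n = 0"
    and lim: "(\<lambda>k. norm (A *v u k - t k)) \<longlonglongrightarrow> cone_gap A g T"
    using cone_gap_minimizing_sequence[OF \<open>g \<noteq> 0\<close> \<open>T \<noteq> {}\<close>] by blast
  obtain y r \<sigma> where "y \<noteq> 0" "inner g y = 0" "A *v y \<in> T" "strict_mono r" "\<And>k. \<sigma> k > 0"
    and lim_u: "(\<lambda>k. \<sigma> k *\<^sub>R u (r k)) \<longlonglongrightarrow> y" and lim_t: "(\<lambda>k. \<sigma> k *\<^sub>R t (r k)) \<longlonglongrightarrow> A *v y"
    using minimizing_sequence_escape_direction[OF \<open>closed T\<close> \<open>cone T\<close> feas lim not_attained]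
    by blast
  have "\<not> locally_polyhedral T (A *v y)"
  proof
    assume "locally_polyhedral T (A *v y)"
    moreover have "(\<lambda>k. norm (A *v u (r k) - t (r k))) \<longlonglongrightarrow> cone_gap A g T"
      using LIMSEQ_subseq_LIMSEQ[OF lim \<open>strict_mono r\<close>] by (simp add: o_def)
    ultimately obtain u' t' where "inner g u' = -1" "t' \<in> T" "norm (A *v u' - t') \<le> cone_gap A g T"
      using cone_gap_attained_if_locally_polyhedral[OF \<open>cone T\<close> _ \<open>inner g y = 0\<close> feas(1) feas(2)
          _ \<open>\<And>k. \<sigma> k > 0\<close> lim_t] by blast
    then show False using not_attained by force
  qed
  moreover have "A *v y \<notin> Lsp T"
  proof
    assume "A *v y \<in> Lsp T"
    then have "(\<lambda>k. inner (\<sigma> k *\<^sub>R u (r k)) y) = (\<lambda>k. 0)"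
      using orth \<open>inner g y = 0\<close> by simp
    moreover have "(\<lambda>k. inner (\<sigma> k *\<^sub>R u (r k)) y) \<longlonglongrightarrow> inner y y"
      by (rule tendsto_inner[OF lim_u tendsto_const])
    ultimately have "inner y y = 0"
      by (simp add: LIMSEQ_const_iff)
    then show False using \<open>y \<noteq> 0\<close> by simp
  qed
  ultimately show thesis
    using that \<open>A *v y \<in> T\<close> \<open>inner g y = 0\<close> by blast
qed

lemma closed_cone_alternative:
  fixes A :: "real^'d^'s" and g :: "real^'d"
  assumes "closed T" "cone T" "T \<noteq> {}"
    and nonneg: "\<And>u. A *v u \<in> T \<Longrightarrow> 0 \<le> inner g u"
  shows "(\<exists>w\<in>T. \<exists>w'\<in>polar_cone (tangent_cone T w). g + transpose A *v w' = 0) \<or>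
    (\<exists>u. A *v u \<in> T \<and> A *v u \<notin> Lsp T \<and> inner g u = 0 \<and> \<not> locally_polyhedral T (A *v u))"
proof (cases "g = 0")
  case True
  have "0 \<in> T" "(0 :: real^'s) \<in> polar_cone (tangent_cone T 0)" "g + transpose A *v 0 = 0"
    using cone_contains_0[OF \<open>cone T\<close>] \<open>T \<noteq> {}\<close> \<open>g = 0\<close> by (simp_all add: polar_cone_def)
  then show ?thesis by blast
next
  case False
  show ?thesis
  proof (cases "\<exists>u t. inner g u = -1 \<and> t \<in> T \<and> norm (A *v u - t) \<le> cone_gap A g T")
    case True
    then obtain u\<^sub>0 t\<^sub>0 where "inner g u\<^sub>0 = -1" "t\<^sub>0 \<in> T" "norm (A *v u\<^sub>0 - t\<^sub>0) \<le> cone_gap A g T"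
      by blast
    moreover have "norm (A *v u\<^sub>0 - t\<^sub>0) \<le> norm (A *v u - t)" if "inner g u = -1" "t \<in> T" for u t
      using calculation(3) cone_gap_le[OF that, of A] by linarith
    ultimately have "\<exists>w'\<in>polar_cone (tangent_cone T t\<^sub>0). g + transpose A *v w' = 0"
      by (intro multiplier_from_cone_gap_minimizer[OF \<open>cone T\<close> nonneg])
    then show ?thesis using \<open>t\<^sub>0 \<in> T\<close> by blast
  next
    case False
    then have "cone_gap A g T < norm (A *v u - t)" if "inner g u = -1" "t \<in> T" for u t
      using that by (simp add: not_le)
    then obtain y where "A *v y \<in> T" "A *v y \<notin> Lsp T" "inner g y = 0"
      "\<not> locally_polyhedral T (A *v y)"
      using degenerate_direction_if_cone_gap_not_attained[OF assms(1-3) \<open>g \<noteq> 0\<close>] by blast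
    then show ?thesis by blast
  qed
qed

lemma neg_in_regular_normal_cone_at_linear_minimizer:
  assumes "u \<in> S" "\<And>y. y \<in> S \<Longrightarrow> inner g u \<le> inner g y"
  shows "- g \<in> regular_normal_cone S u"
proof -
  have "(inner g has_derivative inner g) (at u within S)"
    by (rule bounded_linear_imp_has_derivative[OF bounded_linear_inner_right])
  then have "- g \<in> polar_cone (tangent_cone S u)"
    using assms by (intro minimizer_neg_gradient_in_polar_tangent_cone) auto
  then show ?thesis
    using \<open>u \<in> S\<close> by (simp add: regular_normal_cone_def)
qed

theorem proposition4p1:
  fixes f :: "real^'d \<Rightarrow> real" and gf :: "real^'d \<Rightarrow> real^'d"
    and P :: "real^'d \<Rightarrow> real^'s" and JP :: "real^'d \<Rightarrow> real^'d^'s"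
    and D :: "(real^'s) set" and \<Omega> :: "(real^'d) set" and zb :: "real^'d"
  assumes f_C1: "\<And>z. (f has_derivative (\<lambda>h. inner (gf z) h)) (at z)" "continuous_on UNIV gf"
    and P_C1: "\<And>z. (P has_derivative (\<lambda>h. JP z *v h)) (at z)" "continuous_on UNIV JP"
    and D_closed: "closed D"
    and Omega_def: "\<Omega> = {z. P z \<in> D}"
    and zb_in: "zb \<in> \<Omega>"
    and B_stat: "0 \<in> (\<lambda>v. gf zb + v) ` regular_normal_cone \<Omega> zb"
    and GGCQ: "regular_normal_cone \<Omega> zb = polar_cone (lin_tangent_cone JP P D zb)"
    and subreg: "metrically_subregular
                   (\<lambda>u. {JP zb *v u - t | t. t \<in> tangent_cone D (P zb)}) 0 0"
  shows "(\<exists>w \<in> tangent_cone D (P zb). \<exists>ws \<in> regular_normal_cone (tangent_cone D (P zb)) w.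
            gf zb + transpose (JP zb) *v ws = 0)
       \<or> (\<exists>u \<in> lin_tangent_cone JP P D zb.
            JP zb *v u \<notin> Lsp (tangent_cone D (P zb)) \<and>
            inner (gf zb) u = 0 \<and>
            0 \<in> (\<lambda>v. gf zb + v) ` regular_normal_cone (lin_tangent_cone JP P D zb) u \<and>
            \<not> locally_polyhedral (tangent_cone D (P zb)) (JP zb *v u))"
proof -
  let ?T = "tangent_cone D (P zb)" and ?L = "lin_tangent_cone JP P D zb"
  have L_iff: "u \<in> ?L \<longleftrightarrow> JP zb *v u \<in> ?T" for u
    by (simp add: lin_tangent_cone_def)
  obtain v where "v \<in> regular_normal_cone \<Omega> zb" "0 = gf zb + v"
    using B_stat by blast
  then have "- gf zb \<in> polar_cone ?L"
    using GGCQ by (metis add.commute eq_neg_iff_add_eq_0)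
  then have nonneg: "0 \<le> inner (gf zb) u" if "JP zb *v u \<in> ?T" for u
  proof -
    have "inner (- gf zb) u \<le> 0"
      using \<open>- gf zb \<in> polar_cone ?L\<close> that L_iff unfolding polar_cone_def by blast
    then show ?thesis by simp
  qed
  have "?T \<noteq> {}"
    using zb_in Omega_def zero_in_tangent_cone by blast
  then have "(\<exists>w\<in>?T. \<exists>w'\<in>polar_cone (tangent_cone ?T w). gf zb + transpose (JP zb) *v w' = 0) \<or>
    (\<exists>u. JP zb *v u \<in> ?T \<and> JP zb *v u \<notin> Lsp ?T \<and> inner (gf zb) u = 0 \<and>
      \<not> locally_polyhedral ?T (JP zb *v u))"
    by (rule closed_cone_alternative[OF closed_tangent_cone cone_tangent_cone _ nonneg])
  then show ?thesis
  proof (elim disjE exE conjE bexE)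
    fix w w' assume "w \<in> ?T" "w' \<in> polar_cone (tangent_cone ?T w)" "gf zb + transpose (JP zb) *v w' = 0"
    then show ?thesis by (auto simp: regular_normal_cone_def)
  next
    fix u assume u: "JP zb *v u \<in> ?T" "JP zb *v u \<notin> Lsp ?T" "inner (gf zb) u = 0"
      "\<not> locally_polyhedral ?T (JP zb *v u)"
    have "u \<in> ?L" using u(1) L_iff by blast
    moreover have "inner (gf zb) u \<le> inner (gf zb) y" if "y \<in> ?L" for y
      using nonneg[of y] that L_iff u(3) by simp
    ultimately have "- gf zb \<in> regular_normal_cone ?L u"
      by (rule neg_in_regular_normal_cone_at_linear_minimizer)
    then have "0 \<in> (\<lambda>v. gf zb + v) ` regular_normal_cone ?L u"
      by (rule rev_image_eqI) simp
    with \<open>u \<in> ?L\<close> u(2-4) show ?thesis by blast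
  qed
qed

end
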